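(* Let $t\in[0,1]$, $x\in(0,1]$, and $y$ with $1-e^{-t}\le y<1$. Then \[ (1-yx)\,\frac{\log\big(1-x+x\,\frac{e^{-2xt}}{1-yx}\big)}{x\big(1-\frac{e^{-2xt}}{1-yx}\big)}\ \le\ (1-y)\,\frac{\log\big(\frac{e^{-2t}}{1-y}\big)}{1-\frac{e^{-2t}}{1-y}}, \] with equality at $x=1$. Expressions of the form $\log(1-x+xQ)/(1-Q)$ are understood at $Q=1$ as their limit $-x$. *)

theory Defs
  imports "HOL-Analysis.Analysis"
begin

definition logratio :: "real \<Rightarrow> real \<Rightarrow> real" where
  "logratio x Q = (if Q = 1 then - x else ln (1 - x + x * Q) / (1 - Q))"

end

theory Submission
  imports Defs "HOL-Real_Asymp.Real_Asymp"
begin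

text \<open>Write \<open>\<lambda>(q) = ln q / (q - 1)\<close> and \<open>q(\<xi>) = 1 - \<xi> + \<xi> exp (-2 \<xi> t) / (1 - y \<xi>)\<close>.
  Both sides of the inequality are \<open>-P(\<xi>)\<close> with \<open>P(\<xi>) = (1 - y \<xi>) \<lambda>(q(\<xi>))\<close>, at \<open>\<xi> = x\<close>
  and \<open>\<xi> = 1\<close>, so it suffices that \<open>P\<close> is nonincreasing on \<open>[x, 1]\<close>. The function \<open>\<lambda>\<close> is
  positive and decreasing, and the Pade bound \<open>ln q \<le> 2 (q - 1) / (q + 1)\<close> gives
  \<open>-2 q \<lambda>'(q) \<le> \<lambda>(q)\<close> for \<open>q \<le> 1\<close>. Hence \<open>P' \<le> 0\<close> follows from \<open>(1 - y \<xi>) (-q') \<le> 2 y q\<close>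
  together with \<open>q \<le> 1\<close> wherever \<open>q' < 0\<close>. The former is an exponential-polynomial
  inequality that is increasing in \<open>y\<close>; at the threshold \<open>y = 1 - exp (-t)\<close> it is decreasing in
  \<open>\<xi>\<close> and holds at \<open>\<xi> = 1\<close>.\<close>

definition log_slope :: "real \<Rightarrow> real" where
  "log_slope q = (if q = 1 then 1 else ln q / (q - 1))"

definition log_slope_deriv :: "real \<Rightarrow> real" where
  "log_slope_deriv q = (if q = 1 then -1/2 else ((q - 1) / q - ln q) / (q - 1)^2)"

lemma log_slope_pos:
  fixes q :: real
  assumes "0 < q"
  shows "0 < log_slope q"
  using assms by (cases q "1::real" rule: linorder_cases) (auto simp: log_slope_def divide_neg_neg)

lemma log_slope_deriv_nonpos:
  fixes q :: real
  assumes "0 < q"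
  shows "log_slope_deriv q \<le> 0"
proof -
  have "ln (1/q) \<le> 1/q - 1"
    using assms by (intro ln_le_minus_one) simp
  then have "(q - 1) / q - ln q \<le> 0"
    using assms by (simp add: ln_div diff_divide_distrib)
  then show ?thesis
    by (simp add: log_slope_deriv_def divide_nonpos_nonneg)
qed

lemma has_real_derivative_log_slope:
  fixes q :: real
  assumes "0 < q"
  shows "(log_slope has_real_derivative log_slope_deriv q) (at q)"
proof (cases "q = 1")
  case False
  have "((\<lambda>q. ln q / (q - 1)) has_real_derivative ((q - 1) / q - ln q) / (q - 1)^2) (at q)"
    using assms False by (auto intro!: derivative_eq_intros simp: field_simps power2_eq_square)
  moreover have "eventually (\<lambda>z. log_slope z = ln z / (z - 1)) (nhds q)"
    using eventually_nhds_in_open[of "{z. z \<noteq> 1}" q] False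
    by (auto simp: open_Collect_neq log_slope_def elim!: eventually_mono)
  ultimately show ?thesis
    using False by (subst DERIV_cong_ev[OF refl _ refl]) (auto simp: log_slope_deriv_def)
next
  case True
  have "((\<lambda>z. (ln z - (z - 1)) / (z - 1)^2) \<longlongrightarrow> -1/2) (at (1::real))"
    by (rule filterlim_split_at; real_asymp)
  moreover have "eventually (\<lambda>z. (ln z - (z - 1)) / (z - 1)^2 = (log_slope z - log_slope 1) / (z - 1))
      (at (1::real))"
    by (auto simp: eventually_at_filter log_slope_def field_simps power2_eq_square)
  ultimately have "((\<lambda>z. (log_slope z - log_slope 1) / (z - 1)) \<longlongrightarrow> -1/2) (at (1::real))"
    by (rule Lim_transform_eventually)
  then show ?thesis
    using True by (simp add: has_field_derivative_iff log_slope_deriv_def)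
qed

lemma ln_le_pade:
  fixes q :: real
  assumes "0 < q" "q \<le> 1"
  shows "ln q \<le> 2 * (q - 1) / (q + 1)"
proof -
  define h where "h z = ln z - 2 * (z - 1) / (z + 1)" for z :: real
  have "h q \<le> h 1"
  proof (rule deriv_nonneg_imp_mono[where g = h and a = q and b = 1 and g' = "\<lambda>z. 1/z - 4 / (z + 1)^2"])
    fix z assume "z \<in> {q..1}"
    then have "0 < z" using assms by auto
    then show "(h has_real_derivative 1/z - 4 / (z + 1)^2) (at z)"
      unfolding h_def by (auto intro!: derivative_eq_intros simp: field_simps power2_eq_square)
    have "4 * z \<le> (z + 1)^2"
      using zero_le_power2[of "z - 1"] by (simp add: power2_eq_square algebra_simps)
    then have "4 / (z + 1)^2 \<le> 4 / (4 * z)"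
      using \<open>0 < z\<close> by (intro divide_left_mono) auto
    then show "0 \<le> 1/z - 4 / (z + 1)^2" by simp
  qed (use assms in auto)
  then show ?thesis by (simp add: h_def)
qed

lemma log_slope_deriv_bound:
  fixes q :: real
  assumes "0 < q" "q \<le> 1"
  shows "- 2 * q * log_slope_deriv q \<le> log_slope q"
proof (cases "q = 1")
  case False
  then have "0 < (q - 1)^2" "q - 1 < 0" using assms by auto
  have "(q + 1) * ln q \<le> 2 * (q - 1)"
    using ln_le_pade[OF assms] assms by (simp add: field_simps)
  moreover have "- 2 * q * ((q - 1) / q - ln q) = 2 * q * ln q - 2 * (q - 1)"
    using assms by (simp add: field_simps)
  ultimately have "- 2 * q * ((q - 1) / q - ln q) \<le> (q - 1) * ln q"
    by (simp add: algebra_simps)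
  then have "- 2 * q * ((q - 1) / q - ln q) / (q - 1)^2 \<le> (q - 1) * ln q / (q - 1)^2"
    using \<open>0 < (q - 1)^2\<close> by (rule divide_right_mono[OF _ less_imp_le])
  then show ?thesis
    using False by (simp add: log_slope_def log_slope_deriv_def power2_eq_square)
qed (simp add: log_slope_def log_slope_deriv_def)

text \<open>The derivative of \<open>W \<lambda>(q)\<close> when \<open>W' = -y\<close>.\<close>
lemma weighted_log_slope_deriv_nonpos:
  fixes q q' W y :: real
  assumes "0 < q" "0 < W" "0 \<le> y"
    and "W * - q' \<le> 2 * y * q"
    and "q' < 0 \<Longrightarrow> q \<le> 1"
  shows "- y * log_slope q + W * (log_slope_deriv q * q') \<le> 0"
proof (cases "q' < 0")
  case True
  have "W * (log_slope_deriv q * q') = - log_slope_deriv q * (W * - q')" by simp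
  also have "\<dots> \<le> - log_slope_deriv q * (2 * y * q)"
    using assms(4) log_slope_deriv_nonpos[OF assms(1)] by (intro mult_left_mono) auto
  also have "\<dots> = y * (- 2 * q * log_slope_deriv q)" by simp
  also have "\<dots> \<le> y * log_slope q"
    using log_slope_deriv_bound[OF assms(1) assms(5)[OF True]] assms(3) by (rule mult_left_mono)
  finally show ?thesis by simp
next
  case False
  then have "W * (log_slope_deriv q * q') \<le> 0"
    using assms(2) log_slope_deriv_nonpos[OF assms(1)]
    by (intro mult_nonneg_nonpos mult_nonpos_nonneg) auto
  moreover have "0 \<le> y * log_slope q"
    using assms(3) log_slope_pos[OF assms(1)] by simp
  ultimately show ?thesis by simp
qed

lemma logratio_eq_log_slope:
  fixes x Q :: real
  assumes "0 < x" "0 < Q"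
  shows "logratio x Q = - x * log_slope (1 - x + x * Q)"
proof (cases "Q = 1")
  case False
  then have "1 - x + x * Q \<noteq> 1" "1 - Q \<noteq> 0" using assms by auto
  then show ?thesis
    using False assms by (simp add: logratio_def log_slope_def field_simps)
qed (simp add: logratio_def log_slope_def)

lemma one_minus_exp_minus_bounds:
  fixes t :: real
  assumes "0 \<le> t" "t \<le> 1"
  shows "t / 2 \<le> 1 - exp (- t)" "1 - exp (- t) \<le> t"
proof -
  have "1 \<le> (1 - t / 2) * (1 + t)"
    using assms by (simp add: algebra_simps power2_eq_square mult_left_le)
  then have "exp (- t) \<le> (1 - t / 2) * (exp (- t) * (1 + t))"
    using mult_left_mono[of 1 "(1 - t / 2) * (1 + t)" "exp (- t)"] by (simp add: algebra_simps)
  also have "\<dots> \<le> 1 - t / 2"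
    using exp_ge_add_one_self[of t] assms by (intro mult_left_le) (auto simp: exp_minus field_simps)
  finally have "exp (- t) \<le> 1 - t / 2" .
  then show "t / 2 \<le> 1 - exp (- t)" by simp
  show "1 - exp (- t) \<le> t"
    using exp_ge_add_one_self[of "- t"] by simp
qed

text \<open>With \<open>W = 1 - y \<xi>\<close> and \<open>q = 1 - \<xi> + \<xi> exp (-2 \<xi> t) / W\<close>, the margin is
  \<open>W (2 y q + W q')\<close>; its nonnegativity is the bound \<open>W (- q') \<le> 2 y q\<close>.\<close>
definition margin :: "real \<Rightarrow> real \<Rightarrow> real \<Rightarrow> real" where
  "margin t y \<xi> = 2 * y * (1 - \<xi>) * (1 - \<xi> * y) - (1 - \<xi> * y)^2
     + exp (- 2 * \<xi> * t) * (1 - 2 * \<xi> * t * (1 - \<xi> * y) + 2 * \<xi> * y)"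

lemma margin_at_one_nonneg:
  fixes t :: real
  shows "0 \<le> margin t (1 - exp (- t)) 1"
proof -
  define a where "a = exp (- t)"
  have "a * (1 + t) \<le> 1"
    using exp_ge_add_one_self[of t] by (simp add: a_def exp_minus field_simps)
  have "exp (- 2 * 1 * t) = a^2"
    by (simp add: a_def power2_eq_square exp_add[symmetric])
  then have "margin t (1 - exp (- t)) 1 = 2 * a^2 * (1 - a * (1 + t))"
    unfolding margin_def a_def[symmetric] by (simp add: power2_eq_square algebra_simps)
  then show ?thesis
    using \<open>a * (1 + t) \<le> 1\<close> by simp
qed

lemma margin_deriv_factor_nonpos:
  fixes \<xi> t y :: real
  assumes "0 \<le> \<xi>" "\<xi> \<le> 1" "t / 2 \<le> y" "y \<le> t"
  shows "2 * y - 4 * t + 4 * \<xi> * t^2 * (1 - \<xi> * y) \<le> 0"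
proof (cases "y = 0")
  case False
  then have "0 < y" using assms by simp
  have "4 * (\<xi> * y) * (1 - \<xi> * y) \<le> 1"
    using zero_le_power2[of "2 * \<xi> * y - 1"] by (simp add: power2_eq_square algebra_simps)
  then have "t^2 * (4 * (\<xi> * y) * (1 - \<xi> * y)) \<le> t^2"
    by (simp add: mult_left_le)
  moreover have "(2 * y - t) * (y - t) \<le> 0" "0 \<le> t * y"
    using assms \<open>0 < y\<close> by (auto intro: mult_nonneg_nonpos)
  moreover have "y * (2 * y - 4 * t + 4 * \<xi> * t^2 * (1 - \<xi> * y))
      = (2 * y - t) * (y - t) - t * y + t^2 * (4 * (\<xi> * y) * (1 - \<xi> * y)) - t^2"
    by (simp add: power2_eq_square algebra_simps)
  ultimately have "y * (2 * y - 4 * t + 4 * \<xi> * t^2 * (1 - \<xi> * y)) \<le> 0"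
    by linarith
  then show ?thesis
    using \<open>0 < y\<close> by (simp add: mult_le_0_iff)
qed (use assms in simp)

lemma margin_antitone:
  fixes t y x :: real
  assumes "0 \<le> x" "x \<le> 1" "t / 2 \<le> y" "y \<le> t"
  shows "margin t y 1 \<le> margin t y x"
proof (rule deriv_nonpos_imp_antimono[where g = "margin t y" and a = x and b = 1 and
    g' = "\<lambda>\<xi>. - 2 * y^2 * (1 - \<xi>) + exp (- 2 * \<xi> * t) * (2 * y - 4 * t + 4 * \<xi> * t^2 * (1 - \<xi> * y))"])
  fix \<xi> assume "\<xi> \<in> {x..1}"
  then have \<xi>: "0 \<le> \<xi>" "\<xi> \<le> 1" using assms by auto
  show "(margin t y has_real_derivative
      - 2 * y^2 * (1 - \<xi>) + exp (- 2 * \<xi> * t) * (2 * y - 4 * t + 4 * \<xi> * t^2 * (1 - \<xi> * y))) (at \<xi>)"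
    unfolding margin_def by (auto intro!: derivative_eq_intros simp: power2_eq_square algebra_simps)
  have "exp (- 2 * \<xi> * t) * (2 * y - 4 * t + 4 * \<xi> * t^2 * (1 - \<xi> * y)) \<le> 0"
    using margin_deriv_factor_nonpos[OF \<xi> assms(3,4)] by (simp add: mult_nonneg_nonpos)
  moreover have "- 2 * y^2 * (1 - \<xi>) \<le> 0" using \<xi> by simp
  ultimately show "- 2 * y^2 * (1 - \<xi>)
      + exp (- 2 * \<xi> * t) * (2 * y - 4 * t + 4 * \<xi> * t^2 * (1 - \<xi> * y)) \<le> 0"
    by linarith
qed (use assms in auto)

lemma margin_mono:
  fixes t x y y' :: real
  assumes "0 \<le> x" "x \<le> 1" "0 \<le> t" "0 \<le> y" "y \<le> y'" "y' < 1"
  shows "margin t y x \<le> margin t y' x"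
proof -
  define F where "F = exp (- 2 * x * t)"
  have "x * (2 - x) * (y + y') \<le> 1 * (y + y')"
    using zero_le_power2[of "x - 1"] assms
    by (intro mult_right_mono) (auto simp: power2_eq_square algebra_simps)
  moreover have "0 \<le> x * F * (x * t + 1)"
    using assms by (simp add: F_def)
  ultimately have "0 \<le> (y' - y) * (2 + 2 * x * F * (x * t + 1) - x * (2 - x) * (y + y'))"
    using assms by simp
  also have "\<dots> = margin t y' x - margin t y x"
    unfolding margin_def F_def[symmetric] by (simp add: power2_eq_square algebra_simps)
  finally show ?thesis by simp
qed

lemma margin_nonneg:
  fixes t x y :: real
  assumes "0 \<le> x" "x \<le> 1" "0 \<le> t" "t \<le> 1" "1 - exp (- t) \<le> y" "y < 1"
  shows "0 \<le> margin t y x"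
proof -
  note bounds = one_minus_exp_minus_bounds[OF assms(3,4)]
  have "0 \<le> margin t (1 - exp (- t)) 1" by (rule margin_at_one_nonneg)
  also have "\<dots> \<le> margin t (1 - exp (- t)) x"
    using assms bounds by (intro margin_antitone) auto
  also have "\<dots> \<le> margin t y x"
    using assms bounds by (intro margin_mono) auto
  finally show ?thesis .
qed

definition interp :: "real \<Rightarrow> real \<Rightarrow> real \<Rightarrow> real" where
  "interp t y \<xi> = 1 - \<xi> + \<xi> * (exp (- 2 * \<xi> * t) / (1 - y * \<xi>))"

definition interp_deriv :: "real \<Rightarrow> real \<Rightarrow> real \<Rightarrow> real" where
  "interp_deriv t y \<xi> = -1 + exp (- 2 * \<xi> * t) * (1 - 2 * \<xi> * t * (1 - y * \<xi>)) / (1 - y * \<xi>)^2"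

lemma has_real_derivative_interp:
  fixes t y \<xi> :: real
  assumes "1 - y * \<xi> \<noteq> 0"
  shows "(interp t y has_real_derivative interp_deriv t y \<xi>) (at \<xi>)"
  unfolding interp_def interp_deriv_def using assms
  by (auto intro!: derivative_eq_intros simp: field_simps power2_eq_square)

lemma interp_pos:
  fixes t y \<xi> :: real
  assumes "0 \<le> \<xi>" "\<xi> \<le> 1" "0 < 1 - y * \<xi>"
  shows "0 < interp t y \<xi>"
proof -
  have "0 < exp (- 2 * \<xi> * t) / (1 - y * \<xi>)" using assms by simp
  then show ?thesis
    using assms unfolding interp_def
    by (cases "\<xi> = 1") (auto intro: add_nonneg_pos add_pos_nonneg)
qed

lemma margin_eq_interp:
  fixes t y \<xi> :: real
  assumes "1 - y * \<xi> \<noteq> 0"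
  shows "margin t y \<xi> = (1 - y * \<xi>) * (2 * y * interp t y \<xi> + (1 - y * \<xi>) * interp_deriv t y \<xi>)"
proof -
  define F W where "F = exp (- 2 * \<xi> * t)" and "W = 1 - y * \<xi>"
  have "W * (2 * y * interp t y \<xi> + W * interp_deriv t y \<xi>)
      = 2 * y * (1 - \<xi>) * W + 2 * y * \<xi> * F - W^2 + F * (1 - 2 * \<xi> * t * W)"
    using assms unfolding interp_def interp_deriv_def F_def[symmetric] W_def[symmetric]
    by (simp add: field_simps power2_eq_square)
  moreover have "margin t y \<xi> = 2 * y * (1 - \<xi>) * W - W^2 + F * (1 - 2 * \<xi> * t * W + 2 * \<xi> * y)"
    unfolding margin_def F_def W_def by (simp add: mult.commute)
  ultimately show ?thesis
    unfolding W_def[symmetric] by (simp add: algebra_simps)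
qed

lemma interp_le_one_if_deriv_neg:
  fixes t y \<xi> :: real
  assumes "0 \<le> \<xi>" "0 \<le> t" "0 < 1 - y * \<xi>" "interp_deriv t y \<xi> < 0"
  shows "interp t y \<xi> \<le> 1"
proof (rule ccontr)
  define W F s where "W = 1 - y * \<xi>" and "F = exp (- s)" and "s = 2 * \<xi> * t"
  assume "\<not> interp t y \<xi> \<le> 1"
  then have "\<xi> * 1 < \<xi> * (F / W)"
    by (simp add: interp_def W_def F_def s_def)
  then have "W < F"
    using assms(1,3) by (auto simp: W_def mult_less_cancel_left divide_simps split: if_splits)
  have "F * (1 + s) \<le> 1"
    using exp_ge_add_one_self[of s] by (simp add: F_def exp_minus field_simps)
  moreover have "W * (1 + s) \<le> F * (1 + s)"
    using \<open>W < F\<close> assms by (intro mult_right_mono) (auto simp: s_def)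
  ultimately have "W \<le> 1 - s * W" by (simp add: algebra_simps)
  then have "W * W \<le> F * (1 - s * W)"
    using \<open>W < F\<close> assms(3) by (intro mult_mono) (auto simp: W_def)
  then have "0 \<le> interp_deriv t y \<xi>"
    using assms(3) by (simp add: interp_deriv_def W_def F_def s_def power2_eq_square divide_simps)
  with assms(4) show False by simp
qed

lemma weighted_log_slope_interp_antitone:
  fixes t x y :: real
  assumes "0 \<le> t" "t \<le> 1" "0 < x" "x \<le> 1" "1 - exp (- t) \<le> y" "y < 1"
  shows "(1 - y) * log_slope (interp t y 1) \<le> (1 - y * x) * log_slope (interp t y x)"
proof -
  have "0 \<le> y"
    using assms(1,5) exp_le_one_iff[of "- t"] by linarith
  have W: "0 < 1 - y * \<xi>" if "\<xi> \<le> 1" for \<xi>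
    using mult_left_mono[OF that \<open>0 \<le> y\<close>] assms(6) by simp
  let ?P' = "\<lambda>\<xi>. - y * log_slope (interp t y \<xi>)
    + (1 - y * \<xi>) * (log_slope_deriv (interp t y \<xi>) * interp_deriv t y \<xi>)"
  have "(\<lambda>\<xi>. (1 - y * \<xi>) * log_slope (interp t y \<xi>)) 1
      \<le> (\<lambda>\<xi>. (1 - y * \<xi>) * log_slope (interp t y \<xi>)) x"
  proof (rule deriv_nonpos_imp_antimono[where a = x and b = 1 and g' = ?P'])
    fix \<xi> assume "\<xi> \<in> {x..1}"
    then have \<xi>: "0 \<le> \<xi>" "\<xi> \<le> 1" using assms by auto
    note q_pos = interp_pos[OF \<xi> W[OF \<xi>(2)]]
    have "((\<lambda>\<xi>. log_slope (interp t y \<xi>)) has_real_derivative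
        log_slope_deriv (interp t y \<xi>) * interp_deriv t y \<xi>) (at \<xi>)"
      using has_real_derivative_log_slope[OF q_pos] has_real_derivative_interp W[OF \<xi>(2)]
      by (intro DERIV_chain2) auto
    then show "((\<lambda>\<xi>. (1 - y * \<xi>) * log_slope (interp t y \<xi>)) has_real_derivative ?P' \<xi>) (at \<xi>)"
      by (auto intro!: derivative_eq_intros simp: algebra_simps)
    have "0 \<le> (1 - y * \<xi>) * (2 * y * interp t y \<xi> + (1 - y * \<xi>) * interp_deriv t y \<xi>)"
      using margin_nonneg[OF \<xi> assms(1,2,5,6)] margin_eq_interp W[OF \<xi>(2)] by simp
    then have "0 \<le> 2 * y * interp t y \<xi> + (1 - y * \<xi>) * interp_deriv t y \<xi>"
      using W[OF \<xi>(2)] by (simp add: zero_le_mult_iff)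
    then have "(1 - y * \<xi>) * - interp_deriv t y \<xi> \<le> 2 * y * interp t y \<xi>"
      by simp
    then show "?P' \<xi> \<le> 0"
      using q_pos W[OF \<xi>(2)] \<open>0 \<le> y\<close> interp_le_one_if_deriv_neg[OF \<xi>(1) assms(1) W[OF \<xi>(2)]]
      by (intro weighted_log_slope_deriv_nonpos) auto
  qed (use assms in auto)
  then show ?thesis by simp
qed

theorem mainTheorem14:
  fixes t x y :: real
  assumes "0 \<le> t" "t \<le> 1" "0 < x" "x \<le> 1" "1 - exp (- t) \<le> y" "y < 1"
  shows "(1 - y * x) * logratio x (exp (- 2 * x * t) / (1 - y * x)) / x
           \<le> (1 - y) * logratio 1 (exp (- 2 * t) / (1 - y))
         \<and> (1 - y * 1) * logratio 1 (exp (- 2 * 1 * t) / (1 - y * 1)) / 1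
           = (1 - y) * logratio 1 (exp (- 2 * t) / (1 - y))"
proof -
  have "0 \<le> y"
    using assms(1,5) exp_le_one_iff[of "- t"] by linarith
  then have "0 < 1 - y * x"
    using assms mult_left_le[of x y] by simp
  then have "(1 - y * x) * logratio x (exp (- 2 * x * t) / (1 - y * x)) / x
      = - ((1 - y * x) * log_slope (interp t y x))"
    using assms by (simp add: logratio_eq_log_slope interp_def)
  moreover have "(1 - y) * logratio 1 (exp (- 2 * t) / (1 - y)) = - ((1 - y) * log_slope (interp t y 1))"
    using assms by (simp add: logratio_eq_log_slope interp_def)
  ultimately show ?thesis
    using weighted_log_slope_interp_antitone[OF assms] by simp
qed

end
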